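(* Let $A$ be a general metric space, $N$ a right module on $A$ and $\mathcal F$ a filter on $A$. Then $\inf_{x\in A}\big(M^-(\mathcal F)(x)+N(x)\big)\ \ge\ \lim^-_{\mathcal F}N$. If moreover $\mathcal F$ is weakly flat, this inequality is an equality.
   Context: $[0,\infty]$ with $+$ ($x+\infty=\infty$), $\inf\emptyset=\infty$, $\sup\emptyset=0$. A general metric space $A$ is a set with $A(-,-):A\times A\to[0,\infty]$, $A(x,x)=0$, $A(x,z)\le A(x,y)+A(y,z)$ (no symmetry). A right module on $A$ is $N:A\to[0,\infty]$ with $N(y)\le A(x,y)+N(x)$ for all $x,y$. A filter on $A$ is a nonempty set of nonempty subsets closed under finite intersections and supersets. For $t:A\to[0,\infty]$, $\lim^+_{\mathcal F}t=\inf_{f\in\mathcal F}\sup_{x\in f}t(x)$ and $\lim^-_{\mathcal F}t=\sup_{f\in\mathcal F}\inf_{x\in f}t(x)$. $M^-(\mathcal F)(x)=\lim^-_{y\in\mathcal F}A(x,y)$. $\mathcal F$ is weakly flat iff $\lim^+_{\mathcal F}M^-(\mathcal F)=0$. *)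

theory Defs
  imports Complex_Main "HOL-Library.Extended_Nonnegative_Real"
begin

definition gen_metric :: "('a \<Rightarrow> 'a \<Rightarrow> ennreal) \<Rightarrow> bool" where
  "gen_metric d \<longleftrightarrow> (\<forall>x. d x x = 0) \<and> (\<forall>x y z. d x z \<le> d x y + d y z)"

definition right_module :: "('a \<Rightarrow> 'a \<Rightarrow> ennreal) \<Rightarrow> ('a \<Rightarrow> ennreal) \<Rightarrow> bool" where
  "right_module d N \<longleftrightarrow> (\<forall>x y. N y \<le> d x y + N x)"

definition is_set_filter :: "'a set set \<Rightarrow> bool" where
  "is_set_filter F \<longleftrightarrow> F \<noteq> {} \<and> (\<forall>f\<in>F. f \<noteq> {})
     \<and> (\<forall>f\<in>F. \<forall>g\<in>F. f \<inter> g \<in> F) \<and> (\<forall>f\<in>F. \<forall>g. f \<subseteq> g \<longrightarrow> g \<in> F)"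

definition lim_plus :: "'a set set \<Rightarrow> ('a \<Rightarrow> ennreal) \<Rightarrow> ennreal" where
  "lim_plus F t = (INF f\<in>F. SUP x\<in>f. t x)"

definition lim_minus :: "'a set set \<Rightarrow> ('a \<Rightarrow> ennreal) \<Rightarrow> ennreal" where
  "lim_minus F t = (SUP f\<in>F. INF x\<in>f. t x)"

definition M_minus :: "('a \<Rightarrow> 'a \<Rightarrow> ennreal) \<Rightarrow> 'a set set \<Rightarrow> 'a \<Rightarrow> ennreal" where
  "M_minus d F x = lim_minus F (\<lambda>y. d x y)"

definition weakly_flat :: "('a \<Rightarrow> 'a \<Rightarrow> ennreal) \<Rightarrow> 'a set set \<Rightarrow> bool" where
  "weakly_flat d F \<longleftrightarrow> lim_plus F (M_minus d F) = 0"

end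

theory Submission
  imports Defs
begin

(* Both inequalities are pointwise estimates pushed through the limits.  The right module
   law gives N y \<le> d x y + N x, and taking lim_minus in y yields lim_minus N \<le> M_minus x + N x.
   Conversely, for f in F every x in f has M_minus x \<le> SUP f M_minus, so the infimum of
   M_minus + N is at most SUP f M_minus + INF f N \<le> SUP f M_minus + lim_minus N; the infimum
   over f in F is lim_plus M_minus + lim_minus N, and weak flatness kills the first summand. *)

lemma INF_ennreal_add_const_on: "(INF i\<in>I. f i + (c::ennreal)) = (INF i\<in>I. f i) + c"
  using continuous_at_Inf_mono[of "\<lambda>x. x + c" "f ` I"]
  using continuous_add[of "at_right (Inf (f ` I))", of "\<lambda>x. x" "\<lambda>x. c"]
  by (cases "I = {}") (auto simp: mono_def image_comp)

lemma lim_minus_le_add_const: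
  assumes "\<And>y. t y \<le> s y + c"
  shows "lim_minus F t \<le> lim_minus F s + c"
  unfolding lim_minus_def
proof (rule SUP_least)
  fix f assume "f \<in> F"
  have "(INF y\<in>f. t y) \<le> (INF y\<in>f. s y + c)"
    by (rule INF_mono) (use assms in blast)
  also have "\<dots> = (INF y\<in>f. s y) + c"
    by (rule INF_ennreal_add_const_on)
  also have "\<dots> \<le> (SUP f\<in>F. INF y\<in>f. s y) + c"
    using \<open>f \<in> F\<close> by (intro add_right_mono SUP_upper)
  finally show "(INF y\<in>f. t y) \<le> (SUP f\<in>F. INF y\<in>f. s y) + c" .
qed

lemma lim_minus_le_M_minus_add:
  assumes "right_module d N"
  shows "lim_minus F N \<le> M_minus d F x + N x"
  unfolding M_minus_def
  by (rule lim_minus_le_add_const) (use assms in \<open>simp add: right_module_def\<close>)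

lemma INF_add_le_lim_plus_add_lim_minus:
  "(INF x. s x + t x) \<le> lim_plus F s + lim_minus F (t :: 'a \<Rightarrow> ennreal)"
proof -
  have "(INF x. s x + t x) \<le> (SUP x\<in>f. s x) + lim_minus F t" if "f \<in> F" for f
  proof -
    have "(INF x. s x + t x) \<le> (INF x\<in>f. (SUP x\<in>f. s x) + t x)"
      by (rule INF_mono) (auto intro: add_right_mono SUP_upper)
    also have "\<dots> = (SUP x\<in>f. s x) + (INF x\<in>f. t x)"
      using INF_ennreal_add_const_on[where f = t and I = f and c = "SUP x\<in>f. s x"] by (simp add: add.commute)
    also have "\<dots> \<le> (SUP x\<in>f. s x) + lim_minus F t"
      unfolding lim_minus_def using that by (intro add_left_mono SUP_upper)
    finally show ?thesis .
  qed
  then have "(INF x. s x + t x) \<le> (INF f\<in>F. (SUP x\<in>f. s x) + lim_minus F t)"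
    by (rule INF_greatest)
  also have "\<dots> = lim_plus F s + lim_minus F t"
    unfolding lim_plus_def by (rule INF_ennreal_add_const_on)
  finally show ?thesis .
qed

theorem mainTheorem9:
  fixes d :: "'a \<Rightarrow> 'a \<Rightarrow> ennreal" and N :: "'a \<Rightarrow> ennreal" and F :: "'a set set"
  assumes "gen_metric d" and "right_module d N" and "is_set_filter F"
  shows "(INF x. M_minus d F x + N x) \<ge> lim_minus F N
         \<and> (weakly_flat d F \<longrightarrow> (INF x. M_minus d F x + N x) = lim_minus F N)"
proof
  show lower: "lim_minus F N \<le> (INF x. M_minus d F x + N x)"
    using lim_minus_le_M_minus_add[OF assms(2)] by (rule INF_greatest)
  show "weakly_flat d F \<longrightarrow> (INF x. M_minus d F x + N x) = lim_minus F N"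
  proof
    assume "weakly_flat d F"
    then have "(INF x. M_minus d F x + N x) \<le> lim_minus F N"
      using INF_add_le_lim_plus_add_lim_minus[of "M_minus d F" N F]
      by (simp add: weakly_flat_def)
    with lower show "(INF x. M_minus d F x + N x) = lim_minus F N" by simp
  qed
qed

end
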